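(* Let $G$ be a countable group of orientation preserving $C^2$ (resp. $C^3$) diffeomorphisms of ${\bf S}^1={\bf R}/{\bf Z}$ preserving no probability measure on ${\bf S}^1$, let $\mu$ be a probability measure on $G$ whose support generates $G$ as a semi-group with $\int|\log g'|_\infty d\mu(g)<\infty$, and let $\nu,\lambda<0,C_2,C_3$ be as in the context. Suppose \[\int |Lg|_\infty\,d\mu(g)<\infty\qquad(\text{resp. } \int|Sg|_\infty\,d\mu(g)<\infty).\] Then for $\mu^{\bf N}$-a.e. ${\bf g}$ the number \[C_4({\bf g}):=\sum_{n\ge0}|Lg_{n+1}|_\infty\exp(\lambda n/2)\qquad(\text{resp. } C_4({\bf g}):=\sum_{n\ge0}|Sg_{n+1}|_\infty\exp(\lambda n))\] is finite. Moreover, let $\kappa>0$ and $r=\dfrac{\kappa e^{-\kappa}}{C_2(x,{\bf g})C_3({\bf g})}$. For every $x\in{\bf S}^1$ and $\mu^{\bf N}$-a.e. ${\bf g}$ for which $C_2(x,{\bf g})$ and $C_3({\bf g})$ are finite, for every $n\ge0$ and every $y\in[x-r,x+r]$, \[|L{\bf l_n}(y)|\le C_2(x,{\bf g})C_4({\bf g})e^{\kappa}\qquad(\text{resp. } |S{\bf l_n}(y)|\le C_2(x,{\bf g})^2C_4({\bf g})e^{2\kappa}).\]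
   Context: $Lg=g''/g'$ is the logarithmic derivative and $Sg=(g''/g')'-\frac12(g''/g')^2$ the Schwarzian derivative; $|\cdot|_\infty$ is the sup norm on the circle. $\nu$ is the unique $\mu$-stationary probability measure on ${\bf S}^1$, $\lambda=\int\log g'(x)\,d\mu(g)\,d\nu(x)$, known to be negative. $G^{\bf N}$ carries $\mu^{\bf N}$, $g_n$ is the $n$-th coordinate, ${\bf l_n}=g_n\circ\cdots\circ g_1$, ${\bf l_0}=\mathrm{id}$. $C_2(x,{\bf g})\ge1$ is the infimum of $C\ge1$ with $\frac1C e^{3n\lambda/2}\le{\bf l_n}'(x)\le Ce^{n\lambda/2}$ for all $n\ge0$. $C_3({\bf g})=\sum_{n\ge0}|\log g_{n+1}'|_1\exp(n\lambda/2)$, where $|\varphi|_1=\sup_{x\ne y}|\varphi(x)-\varphi(y)|/|x-y|$ (so $|\log g'|_1=|Lg|_\infty$). *)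

theory Defs
  imports "HOL-Probability.Probability"
begin

text \<open>Circle diffeomorphisms are represented by their lifts to the real line:
  maps g with g(x+1) = g x + 1. The circle map is x \<mapsto> frac (g x) on [0,1).\<close>

definition circ_C2 :: "(real \<Rightarrow> real) \<Rightarrow> bool" where
  "circ_C2 g \<longleftrightarrow> (\<forall>x. g (x + 1) = g x + 1) \<and> (\<forall>x. g differentiable at x)
     \<and> (\<forall>x. deriv g differentiable at x) \<and> continuous_on UNIV (deriv (deriv g))
     \<and> (\<forall>x. deriv g x > 0)"

definition circ_C3 :: "(real \<Rightarrow> real) \<Rightarrow> bool" where
  "circ_C3 g \<longleftrightarrow> circ_C2 g \<and> (\<forall>x. deriv (deriv g) differentiable at x)
     \<and> continuous_on UNIV (deriv (deriv (deriv g)))"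

definition Ldiff :: "(real \<Rightarrow> real) \<Rightarrow> real \<Rightarrow> real" where
  "Ldiff g x = deriv (deriv g) x / deriv g x"

definition Sdiff :: "(real \<Rightarrow> real) \<Rightarrow> real \<Rightarrow> real" where
  "Sdiff g x = deriv (Ldiff g) x - 1/2 * (Ldiff g x)^2"

definition supnorm :: "(real \<Rightarrow> real) \<Rightarrow> real" where
  "supnorm f = Sup (range (\<lambda>x. \<bar>f x\<bar>))"

definition lip1 :: "(real \<Rightarrow> real) \<Rightarrow> real" where
  "lip1 f = Sup {\<bar>f x - f y\<bar> / \<bar>x - y\<bar> | x y. x \<noteq> y}"

inductive_set sgen :: "(real \<Rightarrow> real) set \<Rightarrow> (real \<Rightarrow> real) set" for S where
  base: "g \<in> S \<Longrightarrow> g \<in> sgen S"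
| comp: "f \<in> sgen S \<Longrightarrow> g \<in> sgen S \<Longrightarrow> f \<circ> g \<in> sgen S"

text \<open>The projection of a set of lifts to the circle is a group: inverses exist modulo integer translations.\<close>
definition is_circ_group :: "(real \<Rightarrow> real) set \<Rightarrow> bool" where
  "is_circ_group G \<longleftrightarrow> (\<forall>g\<in>G. \<exists>h\<in>G. \<exists>k::int. \<forall>x. h (g x) = x + of_int k)"

text \<open>Probability measures on the circle, realised on [0,1).\<close>
definition circ_prob :: "real measure \<Rightarrow> bool" where
  "circ_prob m \<longleftrightarrow> prob_space m \<and> sets m = sets borel \<and> emeasure m {0..<1} = 1"

definition circ_push :: "(real \<Rightarrow> real) \<Rightarrow> real measure \<Rightarrow> real measure" where
  "circ_push g m = distr m borel (\<lambda>x. frac (g x))"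

definition stationary :: "(real \<Rightarrow> real) pmf \<Rightarrow> real measure \<Rightarrow> bool" where
  "stationary \<mu> m \<longleftrightarrow> circ_prob m \<and>
     (\<forall>A\<in>sets borel. emeasure m A = (\<integral>\<^sup>+ g. emeasure (circ_push g m) A \<partial>measure_pmf \<mu>))"

text \<open>The random compositions l_n = g_n o ... o g_1, where g_(n+1) = w n.\<close>
primrec lcomp :: "(nat \<Rightarrow> real \<Rightarrow> real) \<Rightarrow> nat \<Rightarrow> real \<Rightarrow> real" where
  "lcomp w 0 = id"
| "lcomp w (Suc n) = w n \<circ> lcomp w n"

definition C2set :: "real \<Rightarrow> real \<Rightarrow> (nat \<Rightarrow> real \<Rightarrow> real) \<Rightarrow> real set" where
  "C2set lam x w = {C. C \<ge> 1 \<and> (\<forall>n. exp (3 * real n * lam / 2) / C \<le> deriv (lcomp w n) x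
                        \<and> deriv (lcomp w n) x \<le> C * exp (real n * lam / 2))}"

definition C2fin :: "real \<Rightarrow> real \<Rightarrow> (nat \<Rightarrow> real \<Rightarrow> real) \<Rightarrow> bool" where
  "C2fin lam x w \<longleftrightarrow> C2set lam x w \<noteq> {}"

definition C2val :: "real \<Rightarrow> real \<Rightarrow> (nat \<Rightarrow> real \<Rightarrow> real) \<Rightarrow> real" where
  "C2val lam x w = Inf (C2set lam x w)"

definition C3term :: "real \<Rightarrow> (nat \<Rightarrow> real \<Rightarrow> real) \<Rightarrow> nat \<Rightarrow> real" where
  "C3term lam w n = lip1 (\<lambda>x. ln (deriv (w n) x)) * exp (real n * lam / 2)"

definition C3fin :: "real \<Rightarrow> (nat \<Rightarrow> real \<Rightarrow> real) \<Rightarrow> bool" where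
  "C3fin lam w \<longleftrightarrow> summable (C3term lam w)"

definition C3val :: "real \<Rightarrow> (nat \<Rightarrow> real \<Rightarrow> real) \<Rightarrow> real" where
  "C3val lam w = suminf (C3term lam w)"

end

theory Submission
  imports Defs "HOL-Library.Periodic_Fun"
begin

text \<open>
  The logarithmic and the Schwarzian derivative are cocycles,
  L(g o f) = (Lg o f) f' + Lf and S(g o f) = (Sg o f) f'^2 + Sf. Hence L l_n(y) and S l_n(y)
  are sums over k < n of Lg_{k+1}(l_k y) l_k'(y) and Sg_{k+1}(l_k y) l_k'(y)^2, and everything
  reduces to the bound l_k'(y) \<le> e^\<kappa> C_2 e^{k\<lambda>/2} for |y - x| \<le> r. At y = x this is the
  definition of C_2. It spreads to the interval by strong induction on k: if it holds for all
  j < k, then l_j moves the interval by at most e^\<kappa> C_2 e^{j\<lambda>/2} r, so, summing the Lipschitz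
  constants of log g_{j+1}' against these displacements, |log l_k'(y) - log l_k'(x)| is at most
  e^\<kappa> C_2 C_3 r = \<kappa>. The series C_4 is almost surely finite because its expectation is a
  finite integral times a convergent geometric series.
\<close>

section \<open>I.i.d. sequences drawn from a pmf\<close>

lemma nn_integral_PiM_component_pmf:
  fixes h :: "'a \<Rightarrow> ennreal"
  shows "(\<integral>\<^sup>+ w. h (w n) \<partial>PiM UNIV (\<lambda>_::nat. measure_pmf \<mu>)) = (\<integral>\<^sup>+ g. h g \<partial>measure_pmf \<mu>)"
proof -
  have "(\<integral>\<^sup>+ g. h g \<partial>measure_pmf \<mu>) =
     (\<integral>\<^sup>+ g. h g \<partial>distr (PiM UNIV (\<lambda>_::nat. measure_pmf \<mu>)) (measure_pmf \<mu>) (\<lambda>w. w n))"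
    by (subst distr_PiM_component) (auto intro: prob_space_measure_pmf)
  also have "\<dots> = (\<integral>\<^sup>+ w. h (w n) \<partial>PiM UNIV (\<lambda>_::nat. measure_pmf \<mu>))"
    by (rule nn_integral_distr) auto
  finally show ?thesis by simp
qed

lemma AE_PiM_set_pmf:
  "AE w in PiM UNIV (\<lambda>_::nat. measure_pmf \<mu>). \<forall>k. w k \<in> set_pmf \<mu>"
  by (subst AE_all_countable)
    (auto intro!: AE_PiM_component AE_measure_pmf prob_space_measure_pmf)

lemma AE_PiM_summable_weighted:
  fixes F :: "'a \<Rightarrow> real" and c :: "nat \<Rightarrow> real"
  assumes fin: "(\<integral>\<^sup>+ g. ennreal (F g) \<partial>measure_pmf \<mu>) < \<infinity>"
    and F_nonneg: "\<And>g. g \<in> set_pmf \<mu> \<Longrightarrow> F g \<ge> 0"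
    and c_nonneg: "\<And>n. c n \<ge> 0" and c: "summable c"
  shows "AE w in PiM UNIV (\<lambda>_::nat. measure_pmf \<mu>). summable (\<lambda>n. F (w n) * c n)"
proof -
  let ?P = "PiM UNIV (\<lambda>_::nat. measure_pmf \<mu>)"
  let ?S = "\<lambda>w. \<Sum>n. ennreal (c n * F (w n))"
  have meas: "(\<lambda>w. h (w n)) \<in> borel_measurable ?P" for n and h :: "'a \<Rightarrow> ennreal"
    by (rule measurable_compose[OF measurable_component_singleton]) auto
  have "(\<integral>\<^sup>+ w. ?S w \<partial>?P) = (\<Sum>n. \<integral>\<^sup>+ w. ennreal (c n * F (w n)) \<partial>?P)"
    by (intro nn_integral_suminf meas)
  also have "\<dots> = (\<Sum>n. ennreal (c n) * \<integral>\<^sup>+ w. ennreal (F (w n)) \<partial>?P)"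
    using c_nonneg by (subst nn_integral_cmult[symmetric]) (auto intro!: meas simp: ennreal_mult')
  also have "\<dots> = ennreal (suminf c) * (\<integral>\<^sup>+ g. ennreal (F g) \<partial>measure_pmf \<mu>)"
    using c_nonneg c
    by (simp add: nn_integral_PiM_component_pmf[where h="\<lambda>g. ennreal (F g)"] suminf_ennreal2)
  also have "\<dots> \<noteq> \<infinity>"
    using fin by (simp add: ennreal_mult_eq_top_iff)
  finally have "AE w in ?P. ?S w \<noteq> \<infinity>"
    by (intro nn_integral_PInf_AE borel_measurable_suminf_order meas)
  with AE_PiM_set_pmf show ?thesis
  proof eventually_elim
    case (elim w)
    have "summable (\<lambda>n. c n * F (w n))"
      by (rule summable_suminf_not_top) (use elim F_nonneg c_nonneg in auto)
    then show ?case by (simp add: mult.commute)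
  qed
qed

lemma summable_exp_mult_real:
  fixes a :: real
  assumes "a < 0"
  shows "summable (\<lambda>n. exp (a * real n))"
  using summable_geometric[of "exp a"] assms by (simp add: exp_of_nat_mult[symmetric] mult.commute)

lemma deriv_periodic:
  fixes h :: "real \<Rightarrow> real"
  assumes "\<And>x. h (x + 1) = h x"
  shows "deriv h (x + 1) = deriv h x"
proof -
  have "deriv h (x + 1) = deriv (\<lambda>t. h (t + 1)) x"
    unfolding deriv_def by (simp add: DERIV_shift)
  also have "(\<lambda>t. h (t + 1)) = h" using assms by auto
  finally show ?thesis .
qed

lemma deriv_lift_periodic:
  fixes g :: "real \<Rightarrow> real"
  assumes lift: "\<And>x. g (x + 1) = g x + 1" and diff: "\<And>x. g differentiable at x"
  shows "deriv g (x + 1) = deriv g x"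
proof -
  have "((\<lambda>t. g (t + 1)) has_real_derivative deriv g (x + 1)) (at x)"
    using diff[of "x + 1"] DERIV_shift[of g "deriv g (x + 1)" x 1]
    by (simp add: DERIV_deriv_iff_real_differentiable)
  also have "(\<lambda>t. g (t + 1)) = (\<lambda>t. g t + 1)" using lift by auto
  finally have "((\<lambda>t. g t + 1) has_real_derivative deriv g (x + 1)) (at x)" .
  then have "((\<lambda>t. (g t + 1) - 1) has_real_derivative deriv g (x + 1) - 0) (at x)"
    by (intro DERIV_diff DERIV_const)
  then show ?thesis by (simp add: DERIV_imp_deriv)
qed

lemma continuous_periodic_bounded:
  fixes h :: "real \<Rightarrow> real"
  assumes per: "\<And>x. h (x + 1) = h x" and cont: "continuous_on UNIV h"
  shows "bdd_above (range (\<lambda>x. \<bar>h x\<bar>))"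
proof -
  interpret periodic_fun_simple' h by standard (rule per)
  have "compact (h ` {0..1})"
    by (rule compact_continuous_image) (use cont continuous_on_subset in auto)
  then obtain M where M: "\<And>y. y \<in> h ` {0..1} \<Longrightarrow> norm y \<le> M"
    using compact_imp_bounded bounded_iff by metis
  have "\<bar>h x\<bar> \<le> M" for x
  proof -
    have "h x = h (frac x)"
      using plus_of_int[of "frac x" "\<lfloor>x\<rfloor>"] by (simp add: frac_def)
    moreover have "frac x \<in> {0..1}" using frac_lt_1[of x] by (simp add: frac_ge_0 less_imp_le)
    ultimately show ?thesis using M[OF imageI] by simp
  qed
  then show ?thesis by (intro bdd_aboveI[where M=M]) auto
qed

lemma abs_le_supnorm:
  assumes "bdd_above (range (\<lambda>x. \<bar>h x\<bar>))"
  shows "\<bar>h x\<bar> \<le> supnorm h"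
  unfolding supnorm_def by (rule cSup_upper) (use assms in auto)

lemma supnorm_nonneg:
  assumes "bdd_above (range (\<lambda>x. \<bar>h x\<bar>))"
  shows "supnorm h \<ge> 0"
  using abs_le_supnorm[OF assms, of 0] by linarith

lemma lip1_bounded_deriv:
  fixes \<phi> \<phi>' :: "real \<Rightarrow> real"
  assumes der: "\<And>t. (\<phi> has_real_derivative \<phi>' t) (at t)" and bound: "\<And>t. \<bar>\<phi>' t\<bar> \<le> M"
  shows "\<bar>\<phi> a - \<phi> c\<bar> \<le> lip1 \<phi> * \<bar>a - c\<bar>" and "lip1 \<phi> \<ge> 0"
proof -
  let ?Q = "{\<bar>\<phi> x - \<phi> y\<bar> / \<bar>x - y\<bar> | x y. x \<noteq> y}"
  have "\<bar>\<phi> x - \<phi> y\<bar> \<le> M * \<bar>x - y\<bar>" for x y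
    using field_differentiable_bound[of UNIV \<phi> \<phi>' M x y] der bound by simp
  then have "bdd_above ?Q"
    by (intro bdd_aboveI[where M=M]) (auto simp: divide_le_eq)
  then have le: "\<bar>\<phi> x - \<phi> y\<bar> / \<bar>x - y\<bar> \<le> lip1 \<phi>" if "x \<noteq> y" for x y
    unfolding lip1_def by (rule cSup_upper[rotated]) (use that in blast)
  have "0 \<le> \<bar>\<phi> 0 - \<phi> 1\<bar> / \<bar>0 - 1\<bar>" by simp
  also have "\<dots> \<le> lip1 \<phi>" by (rule le) simp
  finally show "lip1 \<phi> \<ge> 0" .
  show "\<bar>\<phi> a - \<phi> c\<bar> \<le> lip1 \<phi> * \<bar>a - c\<bar>"
  proof (cases "a = c")
    case False
    then show ?thesis using le[OF False] by (simp add: divide_le_eq)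
  qed simp
qed

definition twice_diff_incr :: "(real \<Rightarrow> real) \<Rightarrow> bool" where
  "twice_diff_incr f \<longleftrightarrow>
     (\<forall>x. f differentiable at x) \<and> (\<forall>x. deriv f differentiable at x) \<and> (\<forall>x. deriv f x > 0)"

definition thrice_diff_incr :: "(real \<Rightarrow> real) \<Rightarrow> bool" where
  "thrice_diff_incr f \<longleftrightarrow> twice_diff_incr f \<and> (\<forall>x. deriv (deriv f) differentiable at x)"

lemma twice_diff_incrD:
  assumes "twice_diff_incr f"
  shows "(f has_real_derivative deriv f x) (at x)"
    and "(deriv f has_real_derivative deriv (deriv f) x) (at x)"
    and "deriv f x > 0"
    and "f differentiable at x" and "deriv f differentiable at x"
  using assms unfolding twice_diff_incr_def by (auto simp: DERIV_deriv_iff_real_differentiable)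

lemma circ_C2_twice_diff_incr: "circ_C2 g \<Longrightarrow> twice_diff_incr g"
  unfolding circ_C2_def twice_diff_incr_def by auto

lemma circ_C3_thrice_diff_incr: "circ_C3 g \<Longrightarrow> thrice_diff_incr g"
  unfolding circ_C3_def thrice_diff_incr_def using circ_C2_twice_diff_incr by auto

lemma circ_C2_deriv_periodic:
  assumes "circ_C2 g"
  shows "deriv g (x + 1) = deriv g x" and "deriv (deriv g) (x + 1) = deriv (deriv g) x"
proof -
  have per: "deriv g (x + 1) = deriv g x" for x
    using assms deriv_lift_periodic[of g] by (auto simp: circ_C2_def)
  then show "deriv g (x + 1) = deriv g x" .
  show "deriv (deriv g) (x + 1) = deriv (deriv g) x"
    using deriv_periodic[of "deriv g"] per by blast
qed

lemma circ_C2_Ldiff_bounded: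
  assumes g: "circ_C2 g"
  shows "bdd_above (range (\<lambda>x. \<bar>Ldiff g x\<bar>))"
proof (rule continuous_periodic_bounded)
  show "Ldiff g (x + 1) = Ldiff g x" for x
    using circ_C2_deriv_periodic[OF g] by (simp add: Ldiff_def)
  have "continuous_on UNIV (deriv g)"
    using g by (auto simp: circ_C2_def differentiable_on_def intro!: differentiable_imp_continuous_on)
  then show "continuous_on UNIV (Ldiff g)"
    using g unfolding Ldiff_def[abs_def] circ_C2_def
    by (intro continuous_on_divide) (auto simp: less_le)
qed

lemma circ_C2_ln_deriv_lipschitz:
  assumes g: "circ_C2 g"
  shows "\<bar>ln (deriv g a) - ln (deriv g c)\<bar> \<le> lip1 (\<lambda>x. ln (deriv g x)) * \<bar>a - c\<bar>"
    and "lip1 (\<lambda>x. ln (deriv g x)) \<ge> 0"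
proof -
  have "((\<lambda>x. ln (deriv g x)) has_real_derivative Ldiff g x) (at x)" for x
    using twice_diff_incrD[OF circ_C2_twice_diff_incr[OF g], of x]
    by (auto intro!: derivative_eq_intros simp: Ldiff_def field_simps)
  note lip = lip1_bounded_deriv[OF this abs_le_supnorm[OF circ_C2_Ldiff_bounded[OF g]]]
  show "\<bar>ln (deriv g a) - ln (deriv g c)\<bar> \<le> lip1 (\<lambda>x. ln (deriv g x)) * \<bar>a - c\<bar>"
    by (rule lip(1))
  show "lip1 (\<lambda>x. ln (deriv g x)) \<ge> 0" by (rule lip(2))
qed

lemma circ_C3_Sdiff_bounded:
  assumes g: "circ_C3 g"
  shows "bdd_above (range (\<lambda>x. \<bar>Sdiff g x\<bar>))"
proof -
  have g2: "circ_C2 g" and c3: "continuous_on UNIV (deriv (deriv (deriv g)))"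
    using g by (auto simp: circ_C3_def)
  have d3: "(deriv (deriv g) has_real_derivative deriv (deriv (deriv g)) x) (at x)" for x
    using g by (simp add: circ_C3_def DERIV_deriv_iff_real_differentiable)
  note D = twice_diff_incrD[OF circ_C2_twice_diff_incr[OF g2]]
  have pos: "deriv g x \<noteq> 0" for x using D(3)[of x] by simp
  have dL: "(Ldiff g has_real_derivative
      (deriv (deriv (deriv g)) x * deriv g x - deriv (deriv g) x * deriv (deriv g) x)
        / (deriv g x * deriv g x)) (at x)" for x
    unfolding Ldiff_def[abs_def] by (rule DERIV_divide[OF d3 D(2) pos])
  have S_eq: "Sdiff g = (\<lambda>x.
      (deriv (deriv (deriv g)) x * deriv g x - deriv (deriv g) x * deriv (deriv g) x)
        / (deriv g x * deriv g x) - 1/2 * (deriv (deriv g) x / deriv g x)^2)"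
    by (rule ext) (simp add: Sdiff_def DERIV_imp_deriv[OF dL] Ldiff_def)
  show ?thesis
  proof (rule continuous_periodic_bounded)
    have "deriv (deriv (deriv g)) (x + 1) = deriv (deriv (deriv g)) x" for x
      using deriv_periodic[of "deriv (deriv g)"] circ_C2_deriv_periodic(2)[OF g2] by blast
    then show "Sdiff g (x + 1) = Sdiff g x" for x
      unfolding S_eq using circ_C2_deriv_periodic[OF g2] by simp
    have "continuous_on UNIV (deriv g)"
      using D(5) by (auto simp: differentiable_on_def intro!: differentiable_imp_continuous_on)
    moreover have "continuous_on UNIV (deriv (deriv g))"
      using g2 by (simp add: circ_C2_def)
    ultimately show "continuous_on UNIV (Sdiff g)"
      unfolding S_eq using pos by (intro continuous_intros c3) auto
  qed
qed

section \<open>Cocycle identities for the random compositions\<close>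

lemma deriv_comp_eq:
  assumes "twice_diff_incr g" and "twice_diff_incr f"
  shows "deriv (g \<circ> f) = (\<lambda>x. deriv g (f x) * deriv f x)"
  using assms by (intro ext DERIV_imp_deriv DERIV_chain twice_diff_incrD)

lemma deriv2_comp_eq:
  assumes g: "twice_diff_incr g" and f: "twice_diff_incr f"
  shows "deriv (deriv (g \<circ> f)) = (\<lambda>x.
    deriv (deriv g) (f x) * deriv f x * deriv f x + deriv g (f x) * deriv (deriv f) x)"
proof
  fix x
  have "((\<lambda>x. deriv g (f x) * deriv f x) has_real_derivative
      deriv (deriv g) (f x) * deriv f x * deriv f x + deriv (deriv f) x * deriv g (f x)) (at x)"
    using g f by (intro DERIV_mult DERIV_chain2[where f="deriv g"] twice_diff_incrD)
  then show "deriv (deriv (g \<circ> f)) x =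
      deriv (deriv g) (f x) * deriv f x * deriv f x + deriv g (f x) * deriv (deriv f) x"
    unfolding deriv_comp_eq[OF g f] by (simp add: DERIV_imp_deriv)
qed

lemma twice_diff_incr_comp:
  assumes g: "twice_diff_incr g" and f: "twice_diff_incr f"
  shows "twice_diff_incr (g \<circ> f)"
  unfolding twice_diff_incr_def
proof (intro conjI allI)
  fix x
  note dg = twice_diff_incrD[OF g] and df = twice_diff_incrD[OF f]
  show "(g \<circ> f) differentiable at x"
    by (rule differentiable_chain_at[OF df(4) dg(4)])
  show "deriv (g \<circ> f) differentiable at x"
    unfolding deriv_comp_eq[OF g f]
    by (rule differentiable_mult[OF differentiable_compose[OF dg(5) df(4)] df(5)])
  show "deriv (g \<circ> f) x > 0"
    unfolding deriv_comp_eq[OF g f] using dg(3)[of "f x"] df(3)[of x] by simp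
qed

lemma thrice_diff_incr_comp:
  assumes g: "thrice_diff_incr g" and f: "thrice_diff_incr f"
  shows "thrice_diff_incr (g \<circ> f)"
proof -
  have g2: "twice_diff_incr g" and f2: "twice_diff_incr f"
    using g f by (auto simp: thrice_diff_incr_def)
  have "deriv (deriv (g \<circ> f)) differentiable at x" for x
  proof -
    note dg = twice_diff_incrD[OF g2] and df = twice_diff_incrD[OF f2]
    have g3: "deriv (deriv g) differentiable at (f x)" and f3: "deriv (deriv f) differentiable at x"
      using g f by (auto simp: thrice_diff_incr_def)
    show ?thesis
      unfolding deriv2_comp_eq[OF g2 f2]
      by (intro differentiable_add differentiable_mult differentiable_compose[OF g3 df(4)]
          differentiable_compose[OF dg(5) df(4)] df(5) f3)
  qed
  then show ?thesis
    using twice_diff_incr_comp[OF g2 f2] by (simp add: thrice_diff_incr_def)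
qed

lemma twice_diff_incr_id: "twice_diff_incr id"
  by (simp add: twice_diff_incr_def id_def)

lemma thrice_diff_incr_id: "thrice_diff_incr id"
  by (simp add: thrice_diff_incr_def twice_diff_incr_id)

lemma Ldiff_comp:
  assumes g: "twice_diff_incr g" and f: "twice_diff_incr f"
  shows "Ldiff (g \<circ> f) x = Ldiff g (f x) * deriv f x + Ldiff f x"
  using twice_diff_incrD(3)[OF g, of "f x"] twice_diff_incrD(3)[OF f, of x]
  unfolding Ldiff_def deriv2_comp_eq[OF g f] unfolding deriv_comp_eq[OF g f]
  by (simp add: field_simps)

lemma Sdiff_comp:
  assumes g: "thrice_diff_incr g" and f: "thrice_diff_incr f"
  shows "Sdiff (g \<circ> f) x = Sdiff g (f x) * (deriv f x)^2 + Sdiff f x"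
proof -
  have g2: "twice_diff_incr g" and f2: "twice_diff_incr f"
    using g f by (auto simp: thrice_diff_incr_def)
  have dL: "(Ldiff h has_real_derivative deriv (Ldiff h) y) (at y)"
    if "thrice_diff_incr h" for h y
    using that twice_diff_incrD[of h y]
    by (auto simp: thrice_diff_incr_def Ldiff_def[abs_def] DERIV_deriv_iff_real_differentiable
        intro!: differentiable_divide)
  have "((\<lambda>x. Ldiff g (f x) * deriv f x + Ldiff f x) has_real_derivative
      deriv (Ldiff g) (f x) * deriv f x * deriv f x + deriv (deriv f) x * Ldiff g (f x)
        + deriv (Ldiff f) x) (at x)"
    using f2 by (intro DERIV_add DERIV_mult DERIV_chain2[OF dL[OF g]] dL[OF f] twice_diff_incrD)
  moreover have "Ldiff (g \<circ> f) = (\<lambda>x. Ldiff g (f x) * deriv f x + Ldiff f x)"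
    using Ldiff_comp[OF g2 f2] by blast
  ultimately have "deriv (Ldiff (g \<circ> f)) x = deriv (Ldiff g) (f x) * deriv f x * deriv f x
      + deriv (deriv f) x * Ldiff g (f x) + deriv (Ldiff f) x"
    by (simp add: DERIV_imp_deriv)
  moreover have "deriv (deriv f) x = Ldiff f x * deriv f x"
    using twice_diff_incrD(3)[OF f2, of x] by (simp add: Ldiff_def)
  ultimately show ?thesis
    unfolding Sdiff_def Ldiff_comp[OF g2 f2] by (simp add: algebra_simps power2_eq_square)
qed

lemma Sdiff_id: "Sdiff id x = 0"
  by (simp add: Sdiff_def Ldiff_def[abs_def])

lemma twice_diff_incr_lcomp: "(\<And>k. twice_diff_incr (w k)) \<Longrightarrow> twice_diff_incr (lcomp w n)"
  by (induction n) (auto intro: twice_diff_incr_comp twice_diff_incr_id)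

lemma thrice_diff_incr_lcomp: "(\<And>k. thrice_diff_incr (w k)) \<Longrightarrow> thrice_diff_incr (lcomp w n)"
  by (induction n) (auto intro: thrice_diff_incr_comp thrice_diff_incr_id)

lemma ln_deriv_lcomp:
  assumes w: "\<And>k. twice_diff_incr (w k)"
  shows "ln (deriv (lcomp w n) y) = (\<Sum>k<n. ln (deriv (w k) (lcomp w k y)))"
proof (induction n)
  case 0
  show ?case by simp
next
  case (Suc n)
  have "deriv (w n) (lcomp w n y) > 0" and "deriv (lcomp w n) y > 0"
    using w twice_diff_incr_lcomp[OF w] by (auto intro: twice_diff_incrD(3))
  then show ?case
    using Suc by (simp only: lcomp.simps deriv_comp_eq[OF w twice_diff_incr_lcomp[OF w]])
      (simp add: ln_mult)
qed

lemma Ldiff_lcomp: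
  assumes w: "\<And>k. twice_diff_incr (w k)"
  shows "Ldiff (lcomp w n) y = (\<Sum>k<n. Ldiff (w k) (lcomp w k y) * deriv (lcomp w k) y)"
proof (induction n)
  case 0
  show ?case by (simp add: Ldiff_def)
next
  case (Suc n)
  then show ?case by (simp only: lcomp.simps Ldiff_comp[OF w twice_diff_incr_lcomp[OF w]]) simp
qed

lemma Sdiff_lcomp:
  assumes w: "\<And>k. thrice_diff_incr (w k)"
  shows "Sdiff (lcomp w n) y = (\<Sum>k<n. Sdiff (w k) (lcomp w k y) * (deriv (lcomp w k) y)^2)"
proof (induction n)
  case (Suc n)
  then show ?case by (simp only: lcomp.simps Sdiff_comp[OF w thrice_diff_incr_lcomp[OF w]]) simp
qed (simp add: Sdiff_id[unfolded id_def])

section \<open>Distortion near a point\<close>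

lemma ln_deriv_lcomp_diff_le:
  assumes w: "\<And>k. twice_diff_incr (w k)"
    and lip: "\<And>k a c. \<bar>ln (deriv (w k) a) - ln (deriv (w k) c)\<bar> \<le> L k * \<bar>a - c\<bar>"
  shows "ln (deriv (lcomp w n) z) - ln (deriv (lcomp w n) x)
    \<le> (\<Sum>k<n. L k * \<bar>lcomp w k z - lcomp w k x\<bar>)"
proof -
  have "ln (deriv (lcomp w n) z) - ln (deriv (lcomp w n) x)
      = (\<Sum>k<n. ln (deriv (w k) (lcomp w k z)) - ln (deriv (w k) (lcomp w k x)))"
    by (simp only: ln_deriv_lcomp[OF w] sum_subtractf)
  also have "\<dots> \<le> (\<Sum>k<n. L k * \<bar>lcomp w k z - lcomp w k x\<bar>)"
    by (rule sum_mono) (rule abs_le_D1, rule lip)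
  finally show ?thesis .
qed

lemma deriv_lcomp_distortion:
  fixes w :: "nat \<Rightarrow> real \<Rightarrow> real" and L e :: "nat \<Rightarrow> real"
  assumes w: "\<And>k. twice_diff_incr (w k)"
    and lip: "\<And>k a c. \<bar>ln (deriv (w k) a) - ln (deriv (w k) c)\<bar> \<le> L k * \<bar>a - c\<bar>"
    and L_nonneg: "\<And>k. L k \<ge> 0" and e_nonneg: "\<And>k. e k \<ge> 0" and C: "C \<ge> 0"
    and at_x: "\<And>k. deriv (lcomp w k) x \<le> C * e k"
    and summ: "summable (\<lambda>k. L k * e k)"
    and radius: "exp \<kappa> * C * (\<Sum>k. L k * e k) * r \<le> \<kappa>"
    and z: "z \<in> {x - r..x + r}"
  shows "deriv (lcomp w n) z \<le> exp \<kappa> * deriv (lcomp w n) x"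
  using z
proof (induction n arbitrary: z rule: less_induct)
  case (less n)
  let ?I = "{x - r..x + r}"
  have r: "r \<ge> 0" and "x \<in> ?I" using less.prems by auto
  have der: "(lcomp w k has_real_derivative deriv (lcomp w k) t) (at t)"
    and pos: "deriv (lcomp w k) t > 0" for k t
    using twice_diff_incrD[OF twice_diff_incr_lcomp[OF w]] by auto
  have moved: "\<bar>lcomp w k z - lcomp w k x\<bar> \<le> exp \<kappa> * C * e k * r" if "k < n" for k
  proof -
    have "\<bar>deriv (lcomp w k) t\<bar> \<le> exp \<kappa> * deriv (lcomp w k) x" if "t \<in> ?I" for t
      using less.IH[OF \<open>k < n\<close> that] pos[of k t] by simp
    then have "\<bar>lcomp w k z - lcomp w k x\<bar> \<le> exp \<kappa> * deriv (lcomp w k) x * \<bar>z - x\<bar>"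
      using field_differentiable_bound[of ?I "lcomp w k" "deriv (lcomp w k)"]
        less.prems \<open>x \<in> ?I\<close> der by (simp add: has_field_derivative_at_within)
    also have "\<dots> \<le> exp \<kappa> * (C * e k) * r"
      using at_x[of k] less.prems pos[of k x] by (intro mult_mono) auto
    finally show ?thesis by (simp add: mult.assoc)
  qed
  have "ln (deriv (lcomp w n) z) - ln (deriv (lcomp w n) x)
      \<le> (\<Sum>k<n. L k * \<bar>lcomp w k z - lcomp w k x\<bar>)"
    by (rule ln_deriv_lcomp_diff_le[OF w lip])
  also have "\<dots> \<le> (\<Sum>k<n. L k * (exp \<kappa> * C * e k * r))"
    using moved L_nonneg by (intro sum_mono mult_left_mono) auto
  also have "\<dots> = exp \<kappa> * C * r * (\<Sum>k<n. L k * e k)"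
    by (simp add: sum_distrib_left algebra_simps)
  also have "\<dots> \<le> exp \<kappa> * C * r * (\<Sum>k. L k * e k)"
    using r C L_nonneg e_nonneg by (intro mult_left_mono sum_le_suminf summ) auto
  also have "\<dots> \<le> \<kappa>" using radius by (simp add: algebra_simps)
  finally have "ln (deriv (lcomp w n) z) \<le> \<kappa> + ln (deriv (lcomp w n) x)" by simp
  then have "exp (ln (deriv (lcomp w n) z)) \<le> exp (\<kappa> + ln (deriv (lcomp w n) x))" by simp
  then show ?case using pos[of n z] pos[of n x] by (simp add: exp_add)
qed

lemma C2val_ge_1: "C2fin lam x w \<Longrightarrow> C2val lam x w \<ge> 1"
  unfolding C2fin_def C2val_def by (rule cInf_greatest) (auto simp: C2set_def)

lemma deriv_lcomp_le_C2val:
  assumes "C2fin lam x w"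
  shows "deriv (lcomp w n) x \<le> C2val lam x w * exp (real n * lam / 2)"
proof -
  have "deriv (lcomp w n) x / exp (real n * lam / 2) \<le> C2val lam x w"
    unfolding C2val_def using assms unfolding C2fin_def
    by (intro cInf_greatest) (auto simp: C2set_def pos_divide_le_eq)
  then show ?thesis by (simp add: pos_divide_le_eq)
qed

lemma C3term_eq: "C3term lam w = (\<lambda>n. lip1 (\<lambda>x. ln (deriv (w n) x)) * exp (real n * lam / 2))"
  by (simp add: C3term_def fun_eq_iff)

lemma deriv_lcomp_near_le:
  assumes w: "\<And>k. circ_C2 (w k)" and c2: "C2fin lam x w" and c3: "C3fin lam w"
    and radius: "exp \<kappa> * C2val lam x w * C3val lam w * r \<le> \<kappa>"
    and y: "y \<in> {x - r..x + r}"
  shows "deriv (lcomp w n) y \<le> exp \<kappa> * C2val lam x w * exp (lam * real n / 2)"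
proof -
  have "deriv (lcomp w n) y \<le> exp \<kappa> * deriv (lcomp w n) x"
  proof (rule deriv_lcomp_distortion[OF circ_C2_twice_diff_incr[OF w]
        circ_C2_ln_deriv_lipschitz(1)[OF w] circ_C2_ln_deriv_lipschitz(2)[OF w] _ _
        deriv_lcomp_le_C2val[OF c2] _ _ y])
    show "summable (\<lambda>k. lip1 (\<lambda>x. ln (deriv (w k) x)) * exp (real k * lam / 2))"
      using c3 by (simp add: C3fin_def C3term_eq)
    show "exp \<kappa> * C2val lam x w * (\<Sum>k. lip1 (\<lambda>x. ln (deriv (w k) x)) * exp (real k * lam / 2))
        * r \<le> \<kappa>"
      using radius by (simp add: C3val_def C3term_eq)
  qed (use C2val_ge_1[OF c2] in auto)
  also have "\<dots> \<le> exp \<kappa> * C2val lam x w * exp (lam * real n / 2)"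
    using deriv_lcomp_le_C2val[OF c2, of n] by (simp add: mult.commute)
  finally show ?thesis .
qed

lemma exp_mult_radius_le:
  fixes C S \<kappa> :: real
  assumes "\<kappa> \<ge> 0"
  shows "exp \<kappa> * C * S * (\<kappa> * exp (-\<kappa>) / (C * S)) \<le> \<kappa>"
  using assms by (cases "C * S = 0") (auto simp: field_simps exp_minus)

lemma abs_sum_mult_power_le:
  fixes a s d e :: "nat \<Rightarrow> real"
  assumes a: "\<And>k. \<bar>a k\<bar> \<le> s k"
    and d: "\<And>k. 0 \<le> d k" "\<And>k. d k \<le> B * e k"
    and B: "B \<ge> 0" and e: "\<And>k. e k \<ge> 0"
    and summ: "summable (\<lambda>k. s k * e k ^ p)"
  shows "\<bar>\<Sum>k<n. a k * d k ^ p\<bar> \<le> B ^ p * (\<Sum>k. s k * e k ^ p)"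
proof -
  have s: "s k \<ge> 0" for k using a[of k] abs_ge_zero[of "a k"] by linarith
  have "\<bar>a k * d k ^ p\<bar> \<le> s k * (B * e k) ^ p" for k
  proof -
    have "d k ^ p \<le> (B * e k) ^ p" by (rule power_mono[OF d(2) d(1)])
    then have "\<bar>a k\<bar> * d k ^ p \<le> s k * (B * e k) ^ p"
      using a[of k] s[of k] d(1)[of k] by (intro mult_mono) auto
    then show ?thesis using d(1)[of k] by (simp add: abs_mult)
  qed
  then have "\<bar>\<Sum>k<n. a k * d k ^ p\<bar> \<le> (\<Sum>k<n. s k * (B * e k) ^ p)"
    by (intro order_trans[OF sum_abs] sum_mono)
  also have "\<dots> = B ^ p * (\<Sum>k<n. s k * e k ^ p)"
    by (simp add: sum_distrib_left power_mult_distrib algebra_simps)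
  also have "\<dots> \<le> B ^ p * (\<Sum>k. s k * e k ^ p)"
    using s e B by (intro mult_left_mono sum_le_suminf summ) auto
  finally show ?thesis .
qed

lemma Ldiff_lcomp_near_bound:
  assumes w: "\<And>k. circ_C2 (w k)" and c2: "C2fin lam x w" and c3: "C3fin lam w"
    and radius: "exp \<kappa> * C2val lam x w * C3val lam w * r \<le> \<kappa>"
    and y: "y \<in> {x - r..x + r}"
    and summ: "summable (\<lambda>k. supnorm (Ldiff (w k)) * exp (lam * real k / 2))"
  shows "\<bar>Ldiff (lcomp w n) y\<bar>
    \<le> C2val lam x w * (\<Sum>k. supnorm (Ldiff (w k)) * exp (lam * real k / 2)) * exp \<kappa>"
proof -
  have "\<bar>\<Sum>k<n. Ldiff (w k) (lcomp w k y) * deriv (lcomp w k) y ^ 1\<bar>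
      \<le> (exp \<kappa> * C2val lam x w) ^ 1 * (\<Sum>k. supnorm (Ldiff (w k)) * exp (lam * real k / 2) ^ 1)"
  proof (rule abs_sum_mult_power_le)
    show "\<bar>Ldiff (w k) (lcomp w k y)\<bar> \<le> supnorm (Ldiff (w k))" for k
      by (rule abs_le_supnorm[OF circ_C2_Ldiff_bounded[OF w]])
    show "0 \<le> deriv (lcomp w k) y" for k
      using twice_diff_incrD(3)[OF twice_diff_incr_lcomp[OF circ_C2_twice_diff_incr[OF w]]]
      by (simp add: less_imp_le)
    show "deriv (lcomp w k) y \<le> exp \<kappa> * C2val lam x w * exp (lam * real k / 2)" for k
      by (rule deriv_lcomp_near_le[OF w c2 c3 radius y])
  qed (use summ C2val_ge_1[OF c2] in auto)
  then show ?thesis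
    by (simp add: Ldiff_lcomp[OF circ_C2_twice_diff_incr[OF w]] algebra_simps)
qed

lemma Sdiff_lcomp_near_bound:
  assumes w: "\<And>k. circ_C3 (w k)" and c2: "C2fin lam x w" and c3: "C3fin lam w"
    and radius: "exp \<kappa> * C2val lam x w * C3val lam w * r \<le> \<kappa>"
    and y: "y \<in> {x - r..x + r}"
    and summ: "summable (\<lambda>k. supnorm (Sdiff (w k)) * exp (lam * real k))"
  shows "\<bar>Sdiff (lcomp w n) y\<bar>
    \<le> (C2val lam x w)^2 * (\<Sum>k. supnorm (Sdiff (w k)) * exp (lam * real k)) * exp (2 * \<kappa>)"
proof -
  have w2: "circ_C2 (w k)" for k using w by (simp add: circ_C3_def)
  have sq: "exp (t / 2) ^ 2 = exp t" and sq': "exp t ^ 2 = exp (2 * t)" for t :: real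
    by (simp_all add: power2_eq_square flip: exp_add)
  have "\<bar>\<Sum>k<n. Sdiff (w k) (lcomp w k y) * deriv (lcomp w k) y ^ 2\<bar>
      \<le> (exp \<kappa> * C2val lam x w) ^ 2 * (\<Sum>k. supnorm (Sdiff (w k)) * exp (lam * real k / 2) ^ 2)"
  proof (rule abs_sum_mult_power_le)
    show "\<bar>Sdiff (w k) (lcomp w k y)\<bar> \<le> supnorm (Sdiff (w k))" for k
      by (rule abs_le_supnorm[OF circ_C3_Sdiff_bounded[OF w]])
    show "0 \<le> deriv (lcomp w k) y" for k
      using twice_diff_incrD(3)[OF twice_diff_incr_lcomp[OF circ_C2_twice_diff_incr[OF w2]]]
      by (simp add: less_imp_le)
    show "deriv (lcomp w k) y \<le> exp \<kappa> * C2val lam x w * exp (lam * real k / 2)" for k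
      by (rule deriv_lcomp_near_le[OF w2 c2 c3 radius y])
  qed (use summ C2val_ge_1[OF c2] in \<open>auto simp: sq\<close>)
  then show ?thesis
    by (simp add: Sdiff_lcomp[OF circ_C3_thrice_diff_incr[OF w]] sq sq' power_mult_distrib
        algebra_simps)
qed

lemma AE_Ldiff_lcomp_bound:
  fixes \<mu> :: "(real \<Rightarrow> real) pmf"
  assumes C2: "\<forall>g\<in>set_pmf \<mu>. circ_C2 g" and lamneg: "lam < 0" and kappa: "\<kappa> \<ge> 0"
    and Lint: "(\<integral>\<^sup>+ g. ennreal (supnorm (Ldiff g)) \<partial>measure_pmf \<mu>) < \<infinity>"
  shows "(AE w in PiM UNIV (\<lambda>_::nat. measure_pmf \<mu>).
         summable (\<lambda>n. supnorm (Ldiff (w n)) * exp (lam * real n / 2))) \<and>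
      (\<forall>x. AE w in PiM UNIV (\<lambda>_::nat. measure_pmf \<mu>).
         C2fin lam x w \<and> C3fin lam w \<longrightarrow>
         (\<forall>n. \<forall>y\<in>{x - \<kappa> * exp (-\<kappa>) / (C2val lam x w * C3val lam w) ..
                    x + \<kappa> * exp (-\<kappa>) / (C2val lam x w * C3val lam w)}.
            \<bar>Ldiff (lcomp w n) y\<bar> \<le> C2val lam x w
               * (\<Sum>k. supnorm (Ldiff (w k)) * exp (lam * real k / 2)) * exp \<kappa>))"
    (is "?summable \<and> (\<forall>x. ?bound x)")
proof -
  have "summable (\<lambda>n. exp (lam / 2 * real n))"
    using lamneg by (intro summable_exp_mult_real) simp
  then have summ: ?summable
    using C2 supnorm_nonneg[OF circ_C2_Ldiff_bounded]
    by (intro AE_PiM_summable_weighted[OF Lint]) (auto simp: mult.commute)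
  have "?bound x" for x
    using summ AE_PiM_set_pmf
  proof eventually_elim
    case (elim w)
    then have "circ_C2 (w k)" for k using C2 by blast
    then show ?case
      using Ldiff_lcomp_near_bound[OF _ _ _ exp_mult_radius_le[OF kappa] _ elim(1)] by blast
  qed
  with summ show ?thesis by blast
qed

lemma AE_Sdiff_lcomp_bound:
  fixes \<mu> :: "(real \<Rightarrow> real) pmf"
  assumes C3: "\<forall>g\<in>set_pmf \<mu>. circ_C3 g" and lamneg: "lam < 0" and kappa: "\<kappa> \<ge> 0"
    and Sint: "(\<integral>\<^sup>+ g. ennreal (supnorm (Sdiff g)) \<partial>measure_pmf \<mu>) < \<infinity>"
  shows "(AE w in PiM UNIV (\<lambda>_::nat. measure_pmf \<mu>).
         summable (\<lambda>n. supnorm (Sdiff (w n)) * exp (lam * real n))) \<and>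
      (\<forall>x. AE w in PiM UNIV (\<lambda>_::nat. measure_pmf \<mu>).
         C2fin lam x w \<and> C3fin lam w \<longrightarrow>
         (\<forall>n. \<forall>y\<in>{x - \<kappa> * exp (-\<kappa>) / (C2val lam x w * C3val lam w) ..
                    x + \<kappa> * exp (-\<kappa>) / (C2val lam x w * C3val lam w)}.
            \<bar>Sdiff (lcomp w n) y\<bar> \<le> (C2val lam x w)^2
               * (\<Sum>k. supnorm (Sdiff (w k)) * exp (lam * real k)) * exp (2 * \<kappa>)))"
    (is "?summable \<and> (\<forall>x. ?bound x)")
proof -
  have summ: ?summable
    using C3 supnorm_nonneg[OF circ_C3_Sdiff_bounded] summable_exp_mult_real[OF lamneg]
    by (intro AE_PiM_summable_weighted[OF Sint]) auto
  have "?bound x" for x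
    using summ AE_PiM_set_pmf
  proof eventually_elim
    case (elim w)
    then have "circ_C3 (w k)" for k using C3 by blast
    then show ?case
      using Sdiff_lcomp_near_bound[OF _ _ _ exp_mult_radius_le[OF kappa] _ elim(1)] by blast
  qed
  with summ show ?thesis by blast
qed

theorem lemma3:
  fixes \<mu> :: "(real \<Rightarrow> real) pmf" and \<nu> :: "real measure" and lam \<kappa> :: real
  assumes C2: "\<forall>g\<in>set_pmf \<mu>. circ_C2 g"
    and grp: "is_circ_group (sgen (set_pmf \<mu>))"
    and noinv: "\<not> (\<exists>m. circ_prob m \<and> (\<forall>g\<in>sgen (set_pmf \<mu>). circ_push g m = m))"
    and logint: "(\<integral>\<^sup>+ g. ennreal (supnorm (\<lambda>x. ln (deriv g x))) \<partial>measure_pmf \<mu>) < \<infinity>"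
    and stat: "stationary \<mu> \<nu>"
    and lam: "lam = measure_pmf.expectation \<mu> (\<lambda>g. integral\<^sup>L \<nu> (\<lambda>x. ln (deriv g x)))"
    and lamneg: "lam < 0"
    and kappa: "\<kappa> > 0"
  shows
   "((\<integral>\<^sup>+ g. ennreal (supnorm (Ldiff g)) \<partial>measure_pmf \<mu>) < \<infinity> \<longrightarrow>
      (AE w in PiM UNIV (\<lambda>_::nat. measure_pmf \<mu>).
         summable (\<lambda>n. supnorm (Ldiff (w n)) * exp (lam * real n / 2))) \<and>
      (\<forall>x. AE w in PiM UNIV (\<lambda>_::nat. measure_pmf \<mu>).
         C2fin lam x w \<and> C3fin lam w \<longrightarrow>
         (\<forall>n. \<forall>y\<in>{x - \<kappa> * exp (-\<kappa>) / (C2val lam x w * C3val lam w) ..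
                    x + \<kappa> * exp (-\<kappa>) / (C2val lam x w * C3val lam w)}.
            \<bar>Ldiff (lcomp w n) y\<bar> \<le> C2val lam x w
               * (\<Sum>k. supnorm (Ldiff (w k)) * exp (lam * real k / 2)) * exp \<kappa>)))
    \<and>
    ((\<forall>g\<in>set_pmf \<mu>. circ_C3 g) \<and>
     (\<integral>\<^sup>+ g. ennreal (supnorm (Sdiff g)) \<partial>measure_pmf \<mu>) < \<infinity> \<longrightarrow>
      (AE w in PiM UNIV (\<lambda>_::nat. measure_pmf \<mu>).
         summable (\<lambda>n. supnorm (Sdiff (w n)) * exp (lam * real n))) \<and>
      (\<forall>x. AE w in PiM UNIV (\<lambda>_::nat. measure_pmf \<mu>).
         C2fin lam x w \<and> C3fin lam w \<longrightarrow>
         (\<forall>n. \<forall>y\<in>{x - \<kappa> * exp (-\<kappa>) / (C2val lam x w * C3val lam w) ..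
                    x + \<kappa> * exp (-\<kappa>) / (C2val lam x w * C3val lam w)}.
            \<bar>Sdiff (lcomp w n) y\<bar> \<le> (C2val lam x w)^2
               * (\<Sum>k. supnorm (Sdiff (w k)) * exp (lam * real k)) * exp (2 * \<kappa>))))"
  using AE_Ldiff_lcomp_bound[OF C2 lamneg less_imp_le[OF kappa]]
    AE_Sdiff_lcomp_bound[OF _ lamneg less_imp_le[OF kappa]]
  by meson

end
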